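(* Let $0<e_0\le1$ and let $d\ge1$ be an integer. For any instance of $P_m, e_{i,k}\ge e_0\mid\mid C_{\max}$, Algorithm 1 with parameter $d$ returns a schedule with makespan at most $\left(1+\frac{m}{d\, e_0}\right)C^*_{\max}$, where $C^*_{\max}$ is the optimal makespan.
   Context: Shared-processing parallel machine scheduling: $m$ identical machines $M_1,\dots,M_m$, $n$ primary jobs available at time $0$ with processing times $p_j>0$, each processed without interruption on one machine, jobs on a machine processed one after another. The time axis of machine $M_i$ is partitioned into consecutive intervals $(0,t_{i,1}],(t_{i,1},t_{i,2}],\dots$ with sharing ratios $e_{i,k}\in(0,1]$; during the $k$-th interval $M_i$ processes primary work at rate $e_{i,k}$. In $P_m, e_{i,k}\ge e_0\mid\mid C_{\max}$ all sharing ratios satisfy $e_{i,k}\ge e_0$ and the goal is to minimize the makespan. LS-ECT: jobs of a list are scheduled one by one; each job is appended after the jobs already assigned to some machine, choosing the machine on which it would complete earliest. Algorithm 1 (parameter $d$): (1) find the $d$ largest jobs (the "large" jobs); (2) for each of the possible assignments of the large jobs to the machines, schedule the large jobs on their assigned machines and then schedule the remaining jobs using LS-ECT; (3) return, among all schedules obtained in step (2), one with minimum makespan. *)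

theory Defs
  imports Complex_Main
begin

text \<open>Machines are indexed 0..<m, jobs 0..<n.
  Machine i has breakpoints t i 0 = 0 < t i 1 < t i 2 < ... (unbounded);
  during the k-th interval (t i k, t i (Suc k)] it processes primary work at rate e i k.\<close>

text \<open>Primary work processed on machine i during (0, T].\<close>
definition cum :: "(nat \<Rightarrow> nat \<Rightarrow> real) \<Rightarrow> (nat \<Rightarrow> nat \<Rightarrow> real) \<Rightarrow> nat \<Rightarrow> real \<Rightarrow> real" where
  "cum t e i T = (\<Sum>k < (LEAST N. T \<le> t i N). e i k * (min T (t i (Suc k)) - t i k))"

definition compl :: "(nat \<Rightarrow> nat \<Rightarrow> real) \<Rightarrow> (nat \<Rightarrow> nat \<Rightarrow> real) \<Rightarrow> nat \<Rightarrow> real \<Rightarrow> real \<Rightarrow> real" where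
  "compl t e i S q = (THE C. S \<le> C \<and> cum t e i C - cum t e i S = q)"

text \<open>A schedule: machine assignment and start times of jobs.\<close>
type_synonym schedule = "(nat \<Rightarrow> nat) \<times> (nat \<Rightarrow> real)"

definition completion :: "(nat \<Rightarrow> nat \<Rightarrow> real) \<Rightarrow> (nat \<Rightarrow> nat \<Rightarrow> real) \<Rightarrow> (nat \<Rightarrow> real) \<Rightarrow> schedule \<Rightarrow> nat \<Rightarrow> real" where
  "completion t e p \<sigma> j = compl t e (fst \<sigma> j) (snd \<sigma> j) (p j)"

definition makespan :: "(nat \<Rightarrow> nat \<Rightarrow> real) \<Rightarrow> (nat \<Rightarrow> nat \<Rightarrow> real) \<Rightarrow> (nat \<Rightarrow> real) \<Rightarrow> nat \<Rightarrow> schedule \<Rightarrow> real" where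
  "makespan t e p n \<sigma> = Max (insert 0 {completion t e p \<sigma> j | j. j < n})"

definition feasible :: "(nat \<Rightarrow> nat \<Rightarrow> real) \<Rightarrow> (nat \<Rightarrow> nat \<Rightarrow> real) \<Rightarrow> nat \<Rightarrow> (nat \<Rightarrow> real) \<Rightarrow> nat \<Rightarrow> schedule \<Rightarrow> bool" where
  "feasible t e m p n \<sigma> \<longleftrightarrow>
     (\<forall>j<n. fst \<sigma> j < m \<and> 0 \<le> snd \<sigma> j) \<and>
     (\<forall>j<n. \<forall>j'<n. j \<noteq> j' \<and> fst \<sigma> j = fst \<sigma> j' \<longrightarrow>
        completion t e p \<sigma> j \<le> snd \<sigma> j' \<or> completion t e p \<sigma> j' \<le> snd \<sigma> j)"

definition opt_makespan :: "(nat \<Rightarrow> nat \<Rightarrow> real) \<Rightarrow> (nat \<Rightarrow> nat \<Rightarrow> real) \<Rightarrow> nat \<Rightarrow> (nat \<Rightarrow> real) \<Rightarrow> nat \<Rightarrow> real" where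
  "opt_makespan t e m p n = Inf {makespan t e p n \<sigma> | \<sigma>. feasible t e m p n \<sigma>}"

text \<open>Sequential list scheduling: jobs of the list are appended one by one after the jobs
  already on a machine; F i is the current finishing time of machine i; ok F j i says that
  job j may be put on machine i in state F.\<close>
inductive seq_place ::
  "(nat \<Rightarrow> nat \<Rightarrow> real) \<Rightarrow> (nat \<Rightarrow> nat \<Rightarrow> real) \<Rightarrow> (nat \<Rightarrow> real) \<Rightarrow>
   ((nat \<Rightarrow> real) \<Rightarrow> nat \<Rightarrow> nat \<Rightarrow> bool) \<Rightarrow>
   (nat \<Rightarrow> real) \<Rightarrow> (nat \<Rightarrow> nat) \<Rightarrow> (nat \<Rightarrow> real) \<Rightarrow> nat list \<Rightarrow>
   (nat \<Rightarrow> real) \<Rightarrow> (nat \<Rightarrow> nat) \<Rightarrow> (nat \<Rightarrow> real) \<Rightarrow> bool"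
  for t e p ok where
  Nil: "seq_place t e p ok F a s [] F a s"
| Cons: "ok F j i \<Longrightarrow>
    seq_place t e p ok (F(i := compl t e i (F i) (p j))) (a(j := i)) (s(j := F i)) js F' a' s' \<Longrightarrow>
    seq_place t e p ok F a s (j # js) F' a' s'"

definition ect_ok :: "(nat \<Rightarrow> nat \<Rightarrow> real) \<Rightarrow> (nat \<Rightarrow> nat \<Rightarrow> real) \<Rightarrow> nat \<Rightarrow> (nat \<Rightarrow> real) \<Rightarrow>
    (nat \<Rightarrow> real) \<Rightarrow> nat \<Rightarrow> nat \<Rightarrow> bool" where
  "ect_ok t e m p F j i \<longleftrightarrow>
     i < m \<and> (\<forall>i'<m. compl t e i (F i) (p j) \<le> compl t e i' (F i') (p j))"

definition largest_jobs :: "(nat \<Rightarrow> real) \<Rightarrow> nat \<Rightarrow> nat \<Rightarrow> nat set \<Rightarrow> bool" where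
  "largest_jobs p n d L \<longleftrightarrow>
     L \<subseteq> {..<n} \<and> card L = min d n \<and> (\<forall>j\<in>L. \<forall>j'\<in>{..<n} - L. p j' \<le> p j)"

text \<open>Step (2) of Algorithm 1 for the assignment f of the large jobs L: the large jobs are
  scheduled on their assigned machines (from time 0, in any order), then the remaining jobs
  (in any list order) by LS-ECT; sigma is a resulting schedule.\<close>
definition alg_run :: "(nat \<Rightarrow> nat \<Rightarrow> real) \<Rightarrow> (nat \<Rightarrow> nat \<Rightarrow> real) \<Rightarrow> nat \<Rightarrow> (nat \<Rightarrow> real) \<Rightarrow> nat \<Rightarrow>
    nat set \<Rightarrow> (nat \<Rightarrow> nat) \<Rightarrow> schedule \<Rightarrow> bool" where
  "alg_run t e m p n L f \<sigma> \<longleftrightarrow>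
     (\<exists>ls rs F1 a1 s1 F2.
        distinct ls \<and> set ls = L \<and> distinct rs \<and> set rs = {..<n} - L \<and>
        seq_place t e p (\<lambda>F j i. i = f j) (\<lambda>_. 0) (\<lambda>_. 0) (\<lambda>_. 0) ls F1 a1 s1 \<and>
        seq_place t e p (ect_ok t e m p) F1 a1 s1 rs F2 (fst \<sigma>) (snd \<sigma>))"

definition algorithm1_output :: "(nat \<Rightarrow> nat \<Rightarrow> real) \<Rightarrow> (nat \<Rightarrow> nat \<Rightarrow> real) \<Rightarrow> nat \<Rightarrow> (nat \<Rightarrow> real) \<Rightarrow>
    nat \<Rightarrow> nat \<Rightarrow> schedule \<Rightarrow> bool" where
  "algorithm1_output t e m p n d \<sigma> \<longleftrightarrow>
     (\<exists>L. largest_jobs p n d L \<and>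
        (\<exists>f. (\<forall>j\<in>L. f j < m) \<and> alg_run t e m p n L f \<sigma>) \<and>
        (\<forall>f. (\<forall>j\<in>L. f j < m) \<longrightarrow>
           (\<exists>\<sigma>'. alg_run t e m p n L f \<sigma>' \<and> makespan t e p n \<sigma> \<le> makespan t e p n \<sigma>')))"

end

theory Submission
  imports Defs "HOL-Analysis.Lipschitz"
begin

text \<open>Fix any feasible schedule with makespan C and consider the run of Algorithm 1 that puts
  the large jobs on the same machines as that schedule. Since every machine processes at rate
  between e0 and 1, machine i can process at most cum i C units of work by time C, and all work
  fits into these capacities. Hence the large jobs, started at time 0, end by C. A remaining job j
  ends by C + p j / e0 under LS-ECT: otherwise it would end after that time on every machine,
  so every machine would already carry more work than its capacity at C. Finally the d large
  jobs are at least as long as j and total work is at most m C, so p j \<le> m C / d.\<close>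

text \<open>Abstracts the processed-work function cum t e i of a machine with sharing ratios in
  [r, 1].\<close>
definition rate_bounded :: "real \<Rightarrow> (real \<Rightarrow> real) \<Rightarrow> bool" where
  "rate_bounded r c \<longleftrightarrow>
     (\<forall>S T. 0 \<le> S \<longrightarrow> S \<le> T \<longrightarrow> r * (T - S) \<le> c T - c S \<and> c T - c S \<le> T - S)"

lemma rate_boundedD:
  assumes "rate_bounded r c" and "0 \<le> S" and "S \<le> T"
  shows "r * (T - S) \<le> c T - c S" and "c T - c S \<le> T - S"
  using assms unfolding rate_bounded_def by blast+

lemma rate_bounded_mono:
  assumes "rate_bounded r c" and "0 < r" and "0 \<le> S" and "S \<le> T"
  shows "c S \<le> c T"
  using rate_boundedD(1)[OF assms(1,3,4)] mult_nonneg_nonneg[of r "T - S"] assms(2,4) by linarith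

lemma rate_bounded_le_imp_le:
  assumes "rate_bounded r c" and "0 < r" and "0 \<le> S" and "c T \<le> c S"
  shows "T \<le> S"
proof (rule ccontr)
  assume "\<not> T \<le> S"
  then have "0 < r * (T - S)" using \<open>0 < r\<close> by simp
  with rate_boundedD(1)[OF assms(1,3), of T] \<open>\<not> T \<le> S\<close> assms(4) show False by simp
qed

lemma rate_bounded_continuous_on:
  assumes "rate_bounded r c" and "0 < r"
  shows "continuous_on {0..} c"
proof (rule lipschitz_on_continuous_on[of 1], rule lipschitz_onI)
  fix x y :: real assume "x \<in> {0..}" "y \<in> {0..}"
  then show "dist (c x) (c y) \<le> 1 * dist x y"
    using rate_boundedD(2)[OF assms(1), of x y] rate_boundedD(2)[OF assms(1), of y x]
      rate_bounded_mono[OF assms, of x y] rate_bounded_mono[OF assms, of y x]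
    by (cases "x \<le> y") (auto simp: dist_real_def)
qed simp

lemma rate_bounded_ex1_increment:
  assumes c: "rate_bounded r c" and r: "0 < r" and S: "0 \<le> S" and q: "0 \<le> q"
  shows "\<exists>!C. S \<le> C \<and> c C - c S = q"
proof (rule ex_ex1I)
  define b where "b = S + q / r"
  have Sb: "S \<le> b" using r q by (simp add: b_def)
  have qb: "q \<le> c b - c S" using rate_boundedD(1)[OF c S Sb] r by (simp add: b_def)
  have "continuous_on {S..b} c"
    by (rule continuous_on_subset[OF rate_bounded_continuous_on[OF c r]]) (use S in auto)
  then have "continuous_on {S..b} (\<lambda>x. c x - c S)"
    by (intro continuous_on_diff continuous_on_const)
  then have "\<exists>C. S \<le> C \<and> C \<le> b \<and> c C - c S = q"
    using IVT'[of "\<lambda>x. c x - c S" S q b] Sb q qb by simp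
  then show "\<exists>C. S \<le> C \<and> c C - c S = q" by blast
next
  fix C C' assume C: "S \<le> C \<and> c C - c S = q" and C': "S \<le> C' \<and> c C' - c S = q"
  then have "c C = c C'" by simp
  then have "C \<le> C'" and "C' \<le> C"
    using rate_bounded_le_imp_le[OF c r] S C C' by (metis order_trans order_refl)+
  then show "C = C'" by simp
qed

lemma cum_zero: "t i 0 = 0 \<Longrightarrow> cum t e i 0 = 0"
  by (simp add: cum_def)

lemma cum_on_interval:
  assumes mono: "strict_mono (t i)" and T: "t i k \<le> T" "T \<le> t i (Suc k)"
  shows "cum t e i T = (\<Sum>k'<k. e i k' * (t i (Suc k') - t i k')) + e i k * (T - t i k)"
proof -
  have le: "t i a \<le> t i b \<longleftrightarrow> a \<le> b" for a b using mono by (simp add: strict_mono_less_eq)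
  have lt: "t i a < t i b \<longleftrightarrow> a < b" for a b using mono by (simp add: strict_mono_less)
  have head: "(\<Sum>k'<k. e i k' * (min T (t i (Suc k')) - t i k')) =
      (\<Sum>k'<k. e i k' * (t i (Suc k') - t i k'))"
  proof (rule sum.cong)
    fix k' assume "k' \<in> {..<k}"
    then have "t i (Suc k') \<le> T" using T(1) le[of "Suc k'" k] by simp
    then show "e i k' * (min T (t i (Suc k')) - t i k') = e i k' * (t i (Suc k') - t i k')"
      by simp
  qed simp
  consider "T = t i k" | "t i k < T" using T by linarith
  then show ?thesis
  proof cases
    case 1
    then have "(LEAST N. T \<le> t i N) = k" by (intro Least_equality) (auto simp: le)
    then show ?thesis using head 1 by (simp add: cum_def)
  next
    case 2
    have "(LEAST N. T \<le> t i N) = Suc k"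
    proof (rule Least_equality)
      fix N assume "T \<le> t i N"
      then show "Suc k \<le> N" using 2 lt[of k N] by linarith
    qed (use T in simp)
    then show ?thesis using head T by (simp add: cum_def)
  qed
qed

lemma cum_rate_bounded:
  assumes t0: "t i 0 = 0" and mono: "strict_mono (t i)" and unbounded: "\<forall>T. \<exists>k. T < t i k"
    and rates: "\<forall>k. r \<le> e i k \<and> e i k \<le> 1"
  shows "rate_bounded r (cum t e i)"
proof -
  let ?c = "cum t e i"
  have bounds_on: "r * (T - S) \<le> ?c T - ?c S \<and> ?c T - ?c S \<le> T - S"
    if "t i k \<le> S" "S \<le> T" "T \<le> t i (Suc k)" for k S T
  proof -
    have "?c T - ?c S = e i k * (T - S)"
      using cum_on_interval[of t i k S e, OF mono] cum_on_interval[of t i k T e, OF mono] that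
      by (simp add: algebra_simps)
    then show ?thesis
      using mult_right_mono[of r "e i k" "T - S"] mult_right_mono[of "e i k" 1 "T - S"] rates that
      by simp
  qed
  have bounds_upto: "r * (T - S) \<le> ?c T - ?c S \<and> ?c T - ?c S \<le> T - S"
    if "0 \<le> S" "S \<le> T" "T \<le> t i k" for k S T
    using that
  proof (induction k arbitrary: T)
    case 0
    then have "S = T" using t0 by simp
    then show ?case by simp
  next
    case (Suc k)
    consider "T \<le> t i k" | "t i k \<le> S" | "S < t i k" "t i k < T" by linarith
    then show ?case
    proof cases
      case 3
      with Suc.IH[of "t i k"] bounds_on[of k "t i k" T] Suc.prems show ?thesis
        by (auto simp: algebra_simps)
    qed (use Suc bounds_on in auto)
  qed
  show ?thesis unfolding rate_bounded_def
  proof (intro allI impI)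
    fix S T :: real assume "0 \<le> S" "S \<le> T"
    moreover obtain k where "T < t i k" using unbounded by blast
    ultimately show "r * (T - S) \<le> ?c T - ?c S \<and> ?c T - ?c S \<le> T - S"
      using bounds_upto[of S T k] by simp
  qed
qed

lemma completion_le_makespan: "j < n \<Longrightarrow> completion t e p \<sigma> j \<le> makespan t e p n \<sigma>"
  unfolding makespan_def by (rule Max_ge) auto

lemma makespan_nonneg: "0 \<le> makespan t e p n \<sigma>"
  unfolding makespan_def by (rule Max_ge) auto

lemma makespan_le:
  assumes "0 \<le> B" and "\<And>j. j < n \<Longrightarrow> completion t e p \<sigma> j \<le> B"
  shows "makespan t e p n \<sigma> \<le> B"
  unfolding makespan_def using assms by (subst Max_le_iff) auto

lemma le_opt_makespan:
  assumes "feasible t e m p n \<sigma>" and "\<And>\<sigma>'. feasible t e m p n \<sigma>' \<Longrightarrow> B \<le> makespan t e p n \<sigma>'"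
  shows "B \<le> opt_makespan t e m p n"
  unfolding opt_makespan_def
proof (rule cInf_greatest)
  show "{makespan t e p n \<sigma> |\<sigma>. feasible t e m p n \<sigma>} \<noteq> {}" using assms(1) by blast
qed (use assms(2) in blast)

lemma largest_jobs_mult_le_sum:
  assumes L: "largest_jobs p n d L" and nonneg: "\<forall>j<n. 0 \<le> p j" and j: "j < n" "j \<notin> L"
  shows "real d * p j \<le> (\<Sum>j<n. p j)"
proof -
  have Ln: "L \<subseteq> {..<n}" and large: "\<forall>l\<in>L. p j \<le> p l"
    using L j unfolding largest_jobs_def by auto
  have "L \<noteq> {..<n}" using j by blast
  then have "card L \<noteq> n" using Ln card_subset_eq[of "{..<n}" L] by auto
  then have "card L = d" using L unfolding largest_jobs_def by (simp add: min_def split: if_splits)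
  then have "real d * p j = (\<Sum>l\<in>L. p j)" by simp
  also have "\<dots> \<le> (\<Sum>l\<in>L. p l)" by (rule sum_mono) (use large in simp)
  also have "\<dots> \<le> (\<Sum>j<n. p j)" by (rule sum_mono2) (use Ln nonneg in auto)
  finally show ?thesis .
qed

locale sharing_instance =
  fixes t e :: "nat \<Rightarrow> nat \<Rightarrow> real" and m :: nat and e0 :: real and p :: "nat \<Rightarrow> real" and n :: nat
  assumes e0_pos: "0 < e0"
    and breakpoints: "\<forall>i<m. t i 0 = 0 \<and> strict_mono (t i) \<and> (\<forall>T. \<exists>k. T < t i k)"
    and rates: "\<forall>i<m. \<forall>k. e0 \<le> e i k \<and> e i k \<le> 1"
    and p_pos: "\<forall>j<n. 0 < p j"
begin

lemma p_nonneg: "j < n \<Longrightarrow> 0 \<le> p j"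
  using p_pos by (simp add: less_imp_le)

lemma machine_rate_bounded: "i < m \<Longrightarrow> rate_bounded e0 (cum t e i)"
  using breakpoints rates by (intro cum_rate_bounded) auto

lemma machine_cum_zero: "i < m \<Longrightarrow> cum t e i 0 = 0"
  using breakpoints by (simp add: cum_zero)

lemma machine_cum_mono: "i < m \<Longrightarrow> 0 \<le> S \<Longrightarrow> S \<le> T \<Longrightarrow> cum t e i S \<le> cum t e i T"
  using rate_bounded_mono[OF machine_rate_bounded e0_pos] .

lemma machine_cum_le: "i < m \<Longrightarrow> 0 \<le> T \<Longrightarrow> cum t e i T \<le> T"
  using rate_boundedD(2)[OF machine_rate_bounded, of i 0 T] machine_cum_zero by simp

lemma compl_spec:
  assumes "i < m" and "0 \<le> S" and "0 \<le> q"
  shows "S \<le> compl t e i S q" and "cum t e i (compl t e i S q) - cum t e i S = q"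
  using theI'[OF rate_bounded_ex1_increment[OF machine_rate_bounded[OF assms(1)] e0_pos assms(2,3)]]
  unfolding compl_def by auto

lemma compl_gt:
  assumes "i < m" and "0 \<le> S" and "0 < q"
  shows "S < compl t e i S q"
proof -
  have "S \<le> compl t e i S q" and "cum t e i (compl t e i S q) - cum t e i S = q"
    using compl_spec[OF assms(1,2)] assms(3) by simp_all
  then show ?thesis using assms(3) by (cases "compl t e i S q = S") auto
qed

definition machine_load :: "nat set \<Rightarrow> (nat \<Rightarrow> nat) \<Rightarrow> nat \<Rightarrow> real" where
  "machine_load P a i = (\<Sum>j | j \<in> P \<and> a j = i. p j)"

lemma machine_load_cong: "\<forall>j\<in>P. a j = a' j \<Longrightarrow> machine_load P a i = machine_load P a' i"
  unfolding machine_load_def by (rule sum.cong) auto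

lemma machine_load_mono:
  assumes "P \<subseteq> Q" and "Q \<subseteq> {..<n}"
  shows "machine_load P a i \<le> machine_load Q a i"
  unfolding machine_load_def
proof (rule sum_mono2)
  show "finite {j. j \<in> Q \<and> a j = i}"
    using assms(2) by (auto intro: finite_subset[of _ "{..<n}"])
qed (use assms p_nonneg in auto)

lemma sum_machine_load:
  assumes "finite P" and "\<forall>j\<in>P. a j < m"
  shows "(\<Sum>i<m. machine_load P a i) = (\<Sum>j\<in>P. p j)"
  unfolding machine_load_def by (rule sum.group) (use assms in auto)

text \<open>Induction on the jobs ordered by start time: the job started last ends by T,
  and all the others end before it starts.\<close>
lemma work_le_cum:
  assumes i: "i < m" and J: "J \<subseteq> {..<n}" and T: "0 \<le> T"
    and ends: "\<forall>j\<in>J. 0 \<le> s j \<and> compl t e i (s j) (p j) \<le> T"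
    and disjoint: "\<forall>j\<in>J. \<forall>j'\<in>J. j \<noteq> j' \<longrightarrow>
      compl t e i (s j) (p j) \<le> s j' \<or> compl t e i (s j') (p j') \<le> s j"
  shows "(\<Sum>j\<in>J. p j) \<le> cum t e i T"
proof -
  have "finite J" using J finite_subset by blast
  then show ?thesis using J T ends disjoint
  proof (induction J arbitrary: T rule: finite_ranking_induct[where f = s])
    case empty
    then show ?case using machine_cum_mono[OF i, of 0 T] machine_cum_zero[OF i] by simp
  next
    case (insert x J)
    let ?c = "compl t e i (s x) (p x)"
    show ?case
    proof (cases "x \<in> J")
      case True
      then show ?thesis using insert by (simp add: insert_absorb)
    next
      case False
      have x: "x < n" "0 \<le> s x" "?c \<le> T" using insert.prems by auto
      have before: "\<forall>y\<in>J. 0 \<le> s y \<and> compl t e i (s y) (p y) \<le> s x"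
      proof
        fix y assume "y \<in> J"
        moreover have "s x < ?c" using compl_gt[OF i x(2)] p_pos x(1) by simp
        ultimately show "0 \<le> s y \<and> compl t e i (s y) (p y) \<le> s x"
          using insert.hyps(2) insert.prems False by force
      qed
      have "(\<Sum>j\<in>J. p j) \<le> cum t e i (s x)"
        using insert.IH[OF _ x(2) before] insert.prems by blast
      moreover have "cum t e i ?c \<le> cum t e i T"
        using machine_cum_mono[OF i _ x(3)] compl_spec(1)[OF i x(2) p_nonneg[OF x(1)]] x(2) by simp
      ultimately show ?thesis
        using False insert.hyps(1) compl_spec(2)[OF i x(2) p_nonneg[OF x(1)]] by simp
    qed
  qed
qed

lemma feasible_machine_load_le:
  assumes feas: "feasible t e m p n \<sigma>" and i: "i < m"
  shows "machine_load {..<n} (fst \<sigma>) i \<le> cum t e i (makespan t e p n \<sigma>)"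
proof -
  let ?J = "{j. j \<in> {..<n} \<and> fst \<sigma> j = i}"
  have "\<forall>j\<in>?J. 0 \<le> snd \<sigma> j \<and> compl t e i (snd \<sigma> j) (p j) \<le> makespan t e p n \<sigma>"
  proof
    fix j assume "j \<in> ?J"
    then show "0 \<le> snd \<sigma> j \<and> compl t e i (snd \<sigma> j) (p j) \<le> makespan t e p n \<sigma>"
      using feas completion_le_makespan[of j n t e p \<sigma>] unfolding feasible_def completion_def
      by auto
  qed
  moreover have "\<forall>j\<in>?J. \<forall>j'\<in>?J. j \<noteq> j' \<longrightarrow>
      compl t e i (snd \<sigma> j) (p j) \<le> snd \<sigma> j' \<or> compl t e i (snd \<sigma> j') (p j') \<le> snd \<sigma> j"
    using feas unfolding feasible_def completion_def by auto
  ultimately show ?thesis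
    unfolding machine_load_def by (intro work_le_cum[OF i _ makespan_nonneg]) auto
qed

lemma feasible_total_work_le:
  assumes "feasible t e m p n \<sigma>"
  shows "(\<Sum>j<n. p j) \<le> (\<Sum>i<m. cum t e i (makespan t e p n \<sigma>))"
proof -
  have "(\<Sum>j<n. p j) = (\<Sum>i<m. machine_load {..<n} (fst \<sigma>) i)"
    using assms by (subst sum_machine_load) (auto simp: feasible_def)
  also have "\<dots> \<le> (\<Sum>i<m. cum t e i (makespan t e p n \<sigma>))"
    by (rule sum_mono) (use feasible_machine_load_le[OF assms] in simp)
  finally show ?thesis .
qed

lemma sum_cum_le:
  assumes "0 \<le> T"
  shows "(\<Sum>i<m. cum t e i T) \<le> real m * T"
proof -
  have "(\<Sum>i<m. cum t e i T) \<le> (\<Sum>i<m. T)"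
    by (rule sum_mono) (use machine_cum_le assms in simp)
  then show ?thesis by simp
qed

text \<open>The invariant of list scheduling once the jobs of P have been placed.\<close>
definition partial_schedule :: "nat set \<Rightarrow> (nat \<Rightarrow> real) \<Rightarrow> (nat \<Rightarrow> nat) \<Rightarrow> (nat \<Rightarrow> real) \<Rightarrow> bool" where
  "partial_schedule P F a s \<longleftrightarrow> P \<subseteq> {..<n} \<and>
     (\<forall>i<m. 0 \<le> F i \<and> cum t e i (F i) = machine_load P a i) \<and>
     (\<forall>j\<in>P. a j < m \<and> 0 \<le> s j \<and> compl t e (a j) (s j) (p j) \<le> F (a j)) \<and>
     (\<forall>j\<in>P. \<forall>j'\<in>P. j \<noteq> j' \<and> a j = a j' \<longrightarrow>
        compl t e (a j) (s j) (p j) \<le> s j' \<or> compl t e (a j') (s j') (p j') \<le> s j)"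

lemma partial_scheduleD:
  assumes "partial_schedule P F a s"
  shows "P \<subseteq> {..<n}" and "finite P"
    and "i < m \<Longrightarrow> 0 \<le> F i" and "i < m \<Longrightarrow> cum t e i (F i) = machine_load P a i"
    and "j \<in> P \<Longrightarrow> a j < m" and "j \<in> P \<Longrightarrow> compl t e (a j) (s j) (p j) \<le> F (a j)"
  using assms finite_subset[of P "{..<n}"] unfolding partial_schedule_def by blast+

lemma partial_schedule_empty: "partial_schedule {} (\<lambda>_. 0) a s"
  unfolding partial_schedule_def machine_load_def using machine_cum_zero by simp

lemma partial_schedule_insert:
  assumes ps: "partial_schedule P F a s" and j: "j < n" "j \<notin> P" and i: "i < m"
  shows "partial_schedule (insert j P) (F(i := compl t e i (F i) (p j))) (a(j := i)) (s(j := F i))"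
proof -
  let ?c = "compl t e i (F i) (p j)"
  have Fi: "0 \<le> F i" using partial_scheduleD(3)[OF ps i] .
  have c: "F i \<le> ?c" "cum t e i ?c - cum t e i (F i) = p j"
    using compl_spec[OF i Fi p_nonneg[OF j(1)]] by simp_all
  have "machine_load (insert j P) (a(j := i)) i' = (if i' = i then p j else 0) + machine_load P a i'"
    for i'
  proof -
    have "{x. x \<in> insert j P \<and> (a(j := i)) x = i'} =
        (if i' = i then insert j else id) {x. x \<in> P \<and> a x = i'}"
      using j(2) by auto
    then show ?thesis unfolding machine_load_def using partial_scheduleD(2)[OF ps] j(2) by simp
  qed
  then show ?thesis
    using ps i j c Fi unfolding partial_schedule_def
    by (auto simp: algebra_simps intro: order_trans)
qed

lemma partial_schedule_feasible:
  "partial_schedule {..<n} F (fst \<sigma>) (snd \<sigma>) \<Longrightarrow> feasible t e m p n \<sigma>"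
  unfolding partial_schedule_def feasible_def completion_def by auto

lemma seq_place_unchanged:
  "seq_place t e p ok F a s js F' a' s' \<Longrightarrow> x \<notin> set js \<Longrightarrow> a' x = a x \<and> s' x = s x"
  by (induction rule: seq_place.induct) auto

lemma seq_place_partial_schedule:
  assumes "seq_place t e p ok F a s js F' a' s'" and "partial_schedule P F a s"
    and "distinct js" and "set js \<subseteq> {..<n} - P"
    and "\<forall>G x i. x \<in> set js \<longrightarrow> ok G x i \<longrightarrow> i < m"
  shows "partial_schedule (P \<union> set js) F' a' s'"
  using assms
proof (induction arbitrary: P rule: seq_place.induct)
  case (Cons F j i a s js F' a' s')
  have "j < n" "j \<notin> P" "i < m" using Cons.prems Cons.hyps(1) by auto
  then have "partial_schedule (insert j P) (F(i := compl t e i (F i) (p j))) (a(j := i)) (s(j := F i))"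
    using partial_schedule_insert[OF Cons.prems(1)] by blast
  then have "partial_schedule (insert j P \<union> set js) F' a' s'"
    by (rule Cons.IH) (use Cons.prems in auto)
  then show ?case by simp
qed simp

lemma seq_place_placement:
  assumes "seq_place t e p ok F a s js F' a' s'" and "partial_schedule P F a s"
    and "distinct js" and "set js \<subseteq> {..<n} - P"
    and "\<forall>G x i. x \<in> set js \<longrightarrow> ok G x i \<longrightarrow> i < m" and "x \<in> set js"
  shows "\<exists>P0 G a0 s0. partial_schedule P0 G a0 s0 \<and> ok G x (a' x) \<and> s' x = G (a' x)"
  using assms
proof (induction arbitrary: P rule: seq_place.induct)
  case (Cons F j i a s js F' a' s')
  show ?case
  proof (cases "x = j")
    case True
    then have "a' x = i" "s' x = F i"
      using seq_place_unchanged[OF Cons.hyps(2), of j] Cons.prems(2) by auto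
    then show ?thesis using Cons True by blast
  next
    case False
    have "j < n" "j \<notin> P" "i < m" using Cons.prems Cons.hyps(1) by auto
    then have "partial_schedule (insert j P) (F(i := compl t e i (F i) (p j))) (a(j := i)) (s(j := F i))"
      using partial_schedule_insert[OF Cons.prems(1)] by blast
    then show ?thesis by (rule Cons.IH) (use Cons.prems False in auto)
  qed
qed simp

text \<open>If j ended later than T + p j / e0 on the machine chosen by LS-ECT, it would end that late
  on every machine, so each machine would already carry more work than it can process by T.\<close>
lemma ect_compl_le:
  assumes ps: "partial_schedule P G a s" and ect: "ect_ok t e m p G j i" and j: "j < n"
    and T: "0 \<le> T" and work: "(\<Sum>j<n. p j) \<le> (\<Sum>i<m. cum t e i T)"
  shows "compl t e i (G i) (p j) \<le> T + p j / e0"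
proof (rule ccontr)
  let ?C = "compl t e i (G i) (p j)"
  assume "\<not> ?C \<le> T + p j / e0"
  then have lt: "p j / e0 < ?C - T" by linarith
  then have late: "p j < e0 * (?C - T)" using pos_divide_less_eq[OF e0_pos] by (simp add: mult.commute)
  have "0 \<le> p j / e0" using p_nonneg[OF j] e0_pos by simp
  then have TC: "T \<le> ?C" using lt by linarith
  have i: "i < m" using ect by (simp add: ect_ok_def)
  have overfull: "cum t e i' T < machine_load P a i'" if i': "i' < m" for i'
  proof -
    let ?D = "compl t e i' (G i') (p j)"
    have G: "0 \<le> G i'" "cum t e i' (G i') = machine_load P a i'"
      using partial_scheduleD(3,4)[OF ps i'] .
    have "e0 * (?C - T) \<le> cum t e i' ?C - cum t e i' T"
      using rate_boundedD(1)[OF machine_rate_bounded[OF i'] T TC] .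
    moreover have "?C \<le> ?D" using ect i' by (simp add: ect_ok_def)
    then have "cum t e i' ?C \<le> cum t e i' ?D" using machine_cum_mono[OF i'] T TC by simp
    moreover have "cum t e i' ?D = machine_load P a i' + p j"
      using compl_spec(2)[OF i' G(1) p_nonneg[OF j]] G(2) by simp
    ultimately show ?thesis using late by linarith
  qed
  have "(\<Sum>i<m. cum t e i T) < (\<Sum>i<m. machine_load P a i)"
    using i overfull by (intro sum_strict_mono) auto
  also have "\<dots> = (\<Sum>j\<in>P. p j)"
    using partial_scheduleD(2,5)[OF ps] by (intro sum_machine_load) auto
  also have "\<dots> \<le> (\<Sum>j<n. p j)"
    using partial_scheduleD(1)[OF ps] p_nonneg by (intro sum_mono2) auto
  finally show False using work by simp
qed

lemma alg_run_first_phase: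
  assumes "alg_run t e m p n L f \<sigma>" and "L \<subseteq> {..<n}" and "\<forall>j\<in>L. f j < m"
  obtains F1 a1 s1 rs F2 where "partial_schedule L F1 a1 s1" and "\<forall>j\<in>L. a1 j = f j"
    and "distinct rs" and "set rs = {..<n} - L"
    and "seq_place t e p (ect_ok t e m p) F1 a1 s1 rs F2 (fst \<sigma>) (snd \<sigma>)"
proof -
  obtain ls rs F1 a1 s1 F2 where ls: "distinct ls" "set ls = L"
    and rs: "distinct rs" "set rs = {..<n} - L"
    and ph1: "seq_place t e p (\<lambda>F j i. i = f j) (\<lambda>_. 0) (\<lambda>_. 0) (\<lambda>_. 0) ls F1 a1 s1"
    and ph2: "seq_place t e p (ect_ok t e m p) F1 a1 s1 rs F2 (fst \<sigma>) (snd \<sigma>)"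
    using assms(1) unfolding alg_run_def by blast
  have "partial_schedule ({} \<union> set ls) F1 a1 s1"
    by (rule seq_place_partial_schedule[OF ph1 partial_schedule_empty]) (use ls assms in auto)
  moreover have "a1 j = f j" if jL: "j \<in> L" for j
    using seq_place_placement[OF ph1 partial_schedule_empty, of j] ls assms jL by auto
  ultimately show thesis using that rs ph2 ls by auto
qed

lemma alg_run_feasible:
  assumes "alg_run t e m p n L f \<sigma>" and "L \<subseteq> {..<n}" and "\<forall>j\<in>L. f j < m"
  shows "feasible t e m p n \<sigma>"
proof -
  obtain F1 a1 s1 rs F2 where ps1: "partial_schedule L F1 a1 s1" and "\<forall>j\<in>L. a1 j = f j"
    and rs: "distinct rs" "set rs = {..<n} - L"
    and ph2: "seq_place t e p (ect_ok t e m p) F1 a1 s1 rs F2 (fst \<sigma>) (snd \<sigma>)"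
    by (rule alg_run_first_phase[OF assms])
  have "partial_schedule (L \<union> set rs) F2 (fst \<sigma>) (snd \<sigma>)"
    by (rule seq_place_partial_schedule[OF ph2 ps1]) (use rs in \<open>simp_all add: ect_ok_def\<close>)
  moreover have "L \<union> set rs = {..<n}" using rs assms(2) by auto
  ultimately show ?thesis by (intro partial_schedule_feasible) simp
qed

lemma alg_run_large_job_completion_le:
  assumes run: "alg_run t e m p n L f \<sigma>" and L: "L \<subseteq> {..<n}" "\<forall>j\<in>L. f j < m"
    and j: "j \<in> L" and T: "0 \<le> T" and load: "machine_load L f (f j) \<le> cum t e (f j) T"
  shows "completion t e p \<sigma> j \<le> T"
proof -
  obtain F1 a1 s1 rs F2 where ps1: "partial_schedule L F1 a1 s1" and a1: "\<forall>j\<in>L. a1 j = f j"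
    and "distinct rs" and rs: "set rs = {..<n} - L"
    and ph2: "seq_place t e p (ect_ok t e m p) F1 a1 s1 rs F2 (fst \<sigma>) (snd \<sigma>)"
    by (rule alg_run_first_phase[OF run L])
  have \<sigma>j: "fst \<sigma> j = f j" "snd \<sigma> j = s1 j"
    using seq_place_unchanged[OF ph2, of j] rs j a1 by auto
  have fj: "f j < m" using L j by blast
  have "completion t e p \<sigma> j \<le> F1 (f j)"
    using partial_scheduleD(6)[OF ps1 j] \<sigma>j a1 j unfolding completion_def by simp
  moreover have "cum t e (f j) (F1 (f j)) = machine_load L f (f j)"
    using partial_scheduleD(4)[OF ps1 fj] machine_load_cong[OF a1] by simp
  then have "F1 (f j) \<le> T"
    using rate_bounded_le_imp_le[OF machine_rate_bounded[OF fj] e0_pos T] load by simp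
  ultimately show ?thesis by simp
qed

lemma alg_run_small_job_completion_le:
  assumes run: "alg_run t e m p n L f \<sigma>" and L: "L \<subseteq> {..<n}" "\<forall>j\<in>L. f j < m"
    and j: "j \<in> {..<n} - L" and T: "0 \<le> T" and work: "(\<Sum>j<n. p j) \<le> (\<Sum>i<m. cum t e i T)"
  shows "completion t e p \<sigma> j \<le> T + p j / e0"
proof -
  obtain F1 a1 s1 rs F2 where ps1: "partial_schedule L F1 a1 s1" and "\<forall>j\<in>L. a1 j = f j"
    and rs: "distinct rs" "set rs = {..<n} - L"
    and ph2: "seq_place t e p (ect_ok t e m p) F1 a1 s1 rs F2 (fst \<sigma>) (snd \<sigma>)"
    by (rule alg_run_first_phase[OF run L])
  obtain P0 G a0 s0 where "partial_schedule P0 G a0 s0" "ect_ok t e m p G j (fst \<sigma> j)"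
    "snd \<sigma> j = G (fst \<sigma> j)"
    using seq_place_placement[OF ph2 ps1, of j] rs j by (auto simp: ect_ok_def)
  then show ?thesis using ect_compl_le[OF _ _ _ T work] j unfolding completion_def by simp
qed

lemma alg_run_makespan_le:
  assumes feas: "feasible t e m p n \<sigma>'" and L: "largest_jobs p n d L" and d: "1 \<le> d"
    and run: "alg_run t e m p n L (fst \<sigma>') \<sigma>"
  shows "makespan t e p n \<sigma> \<le> (1 + real m / (real d * e0)) * makespan t e p n \<sigma>'"
proof -
  define C where "C = makespan t e p n \<sigma>'"
  have C: "0 \<le> C" unfolding C_def by (rule makespan_nonneg)
  have Ln: "L \<subseteq> {..<n}" using L by (simp add: largest_jobs_def)
  have f: "\<forall>j\<in>L. fst \<sigma>' j < m" using feas Ln by (auto simp: feasible_def)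
  have work: "(\<Sum>j<n. p j) \<le> (\<Sum>i<m. cum t e i C)"
    using feasible_total_work_le[OF feas] by (simp add: C_def)
  have slack: "0 \<le> real m * C / (real d * e0)" using C e0_pos by simp
  have "completion t e p \<sigma> j \<le> C + real m * C / (real d * e0)" if j: "j < n" for j
  proof (cases "j \<in> L")
    case True
    have "machine_load L (fst \<sigma>') i \<le> cum t e i C" if "i < m" for i
      using order_trans[OF machine_load_mono[OF Ln order_refl] feasible_machine_load_le[OF feas that]]
      by (simp add: C_def)
    then have "completion t e p \<sigma> j \<le> C"
      using alg_run_large_job_completion_le[OF run Ln f True C] f True by simp
    then show ?thesis using slack by simp
  next
    case False
    have "real d * p j \<le> real m * C"
      using largest_jobs_mult_le_sum[OF L _ j False] p_nonneg work sum_cum_le[OF C] by fastforce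
    then have "p j / e0 \<le> real m * C / (real d * e0)"
      using d e0_pos by (simp add: field_simps)
    moreover have "completion t e p \<sigma> j \<le> C + p j / e0"
      using alg_run_small_job_completion_le[OF run Ln f _ C work] j False by simp
    ultimately show ?thesis by simp
  qed
  then have "makespan t e p n \<sigma> \<le> C + real m * C / (real d * e0)"
    using C slack by (intro makespan_le) auto
  then show ?thesis by (simp add: C_def algebra_simps)
qed

lemma algorithm1_output_feasible:
  "algorithm1_output t e m p n d \<sigma> \<Longrightarrow> feasible t e m p n \<sigma>"
  using alg_run_feasible unfolding algorithm1_output_def largest_jobs_def by blast

lemma algorithm1_output_makespan_le:
  assumes out: "algorithm1_output t e m p n d \<sigma>" and d: "1 \<le> d" and feas: "feasible t e m p n \<sigma>'"
  shows "makespan t e p n \<sigma> \<le> (1 + real m / (real d * e0)) * makespan t e p n \<sigma>'"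
proof -
  obtain L where L: "largest_jobs p n d L" and best: "\<forall>f. (\<forall>j\<in>L. f j < m) \<longrightarrow>
      (\<exists>\<sigma>''. alg_run t e m p n L f \<sigma>'' \<and> makespan t e p n \<sigma> \<le> makespan t e p n \<sigma>'')"
    using out unfolding algorithm1_output_def by blast
  have "\<forall>j\<in>L. fst \<sigma>' j < m" using feas L by (auto simp: feasible_def largest_jobs_def)
  then obtain \<sigma>'' where "alg_run t e m p n L (fst \<sigma>') \<sigma>''"
    and "makespan t e p n \<sigma> \<le> makespan t e p n \<sigma>''"
    using best by blast
  then show ?thesis using alg_run_makespan_le[OF feas L d] by (meson order_trans)
qed

end

theorem lemma1:
  fixes t e :: "nat \<Rightarrow> nat \<Rightarrow> real" and p :: "nat \<Rightarrow> real"
    and m n d :: nat and e0 :: real and \<sigma> :: schedule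
  assumes "0 < e0" and "e0 \<le> 1" and "1 \<le> d" and "1 \<le> m"
    and "\<forall>j<n. 0 < p j"
    and "\<forall>i<m. t i 0 = 0 \<and> strict_mono (t i) \<and> (\<forall>T. \<exists>k. T < t i k)"
    and "\<forall>i<m. \<forall>k. e0 \<le> e i k \<and> e i k \<le> 1"
    and "algorithm1_output t e m p n d \<sigma>"
  shows "makespan t e p n \<sigma> \<le> (1 + real m / (real d * e0)) * opt_makespan t e m p n"
proof -
  interpret sharing_instance t e m e0 p n
    using assms by unfold_locales
  define K where "K = 1 + real m / (real d * e0)"
  have K: "0 < K" using assms(1) by (simp add: K_def add_pos_nonneg)
  have "makespan t e p n \<sigma> / K \<le> opt_makespan t e m p n"
  proof (rule le_opt_makespan[OF algorithm1_output_feasible[OF assms(8)]])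
    fix \<sigma>' assume "feasible t e m p n \<sigma>'"
    then show "makespan t e p n \<sigma> / K \<le> makespan t e p n \<sigma>'"
      using algorithm1_output_makespan_le[OF assms(8,3)] K by (simp add: K_def divide_le_eq mult.commute)
  qed
  then show ?thesis using K by (simp add: K_def divide_le_eq mult.commute)
qed

end
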